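(* Let $\mathcal{C}$ be a covering of a finite set $E$ such that both $SH$ and $XH$ (defined below) are closure operators of matroids on $E$. Then $VH$ is also the closure operator of a matroid on $E$, and $\mathcal{I}_{SH}(\mathcal{C})\subseteq\mathcal{I}_{XH}(\mathcal{C})=\mathcal{I}_{VH}(\mathcal{C})$ and $\mathcal{L}_{SH}(M(\mathcal{C}))\subseteq\mathcal{L}_{XH}(M(\mathcal{C}))=\mathcal{L}_{VH}(M(\mathcal{C}))$.
   Context: A covering of $E$ is a family of nonempty subsets of $E$ with union $E$. For $x\in E$: $I(x)=\bigcup\{K\in\mathcal{C}:x\in K\}$ and $N(x)=\bigcap\{K\in\mathcal{C}:x\in K\}$. For $X\subseteq E$: $SH(X)=\bigcup\{K\in\mathcal{C}:K\cap X\neq\emptyset\}$, $XH(X)=\{x:N(x)\cap X\neq\emptyset\}$, $VH(X)=\bigcup\{N(x):N(x)\cap X\neq\emptyset\}$. When an operator $H\in\{SH,XH,VH\}$ is the closure operator of a matroid on $E$ (closure meaning $cl(X)=\{a:r(X\cup\{a\})=r(X)\}$), that matroid has independent sets $\mathcal{I}_H(\mathcal{C})=\{I\subseteq E:x\notin H(I-\{x\})\text{ for all }x\in I\}$, and $\mathcal{L}_H(M(\mathcal{C}))=\{X\subseteq E:H(X)=X\}$ denotes its set of closed sets ordered by inclusion. *)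

theory Defs
  imports Main
begin

definition covering :: "'a set set \<Rightarrow> 'a set \<Rightarrow> bool" where
  "covering C E \<longleftrightarrow> (\<forall>K\<in>C. K \<noteq> {} \<and> K \<subseteq> E) \<and> \<Union>C = E"

definition cov_I :: "'a set set \<Rightarrow> 'a \<Rightarrow> 'a set" where
  "cov_I C x = \<Union>{K\<in>C. x \<in> K}"

definition cov_N :: "'a set set \<Rightarrow> 'a \<Rightarrow> 'a set" where
  "cov_N C x = \<Inter>{K\<in>C. x \<in> K}"

definition SH :: "'a set set \<Rightarrow> 'a set \<Rightarrow> 'a set" where
  "SH C X = \<Union>{K\<in>C. K \<inter> X \<noteq> {}}"

definition XH :: "'a set set \<Rightarrow> 'a set \<Rightarrow> 'a set \<Rightarrow> 'a set" where
  "XH C E X = {x\<in>E. cov_N C x \<inter> X \<noteq> {}}"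

definition VH :: "'a set set \<Rightarrow> 'a set \<Rightarrow> 'a set \<Rightarrow> 'a set" where
  "VH C E X = \<Union>{cov_N C x |x. x \<in> E \<and> cov_N C x \<inter> X \<noteq> {}}"

definition matroid :: "'a set \<Rightarrow> ('a set \<Rightarrow> bool) \<Rightarrow> bool" where
  "matroid E indep \<longleftrightarrow> finite E \<and>
     (\<forall>X. indep X \<longrightarrow> X \<subseteq> E) \<and>
     indep {} \<and>
     (\<forall>X Y. indep X \<and> Y \<subseteq> X \<longrightarrow> indep Y) \<and>
     (\<forall>X Y. indep X \<and> indep Y \<and> card X < card Y \<longrightarrow> (\<exists>y\<in>Y - X. indep (insert y X)))"

definition mrank :: "('a set \<Rightarrow> bool) \<Rightarrow> 'a set \<Rightarrow> nat" where
  "mrank indep X = Max {card I |I. I \<subseteq> X \<and> indep I}"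

definition mclosure :: "'a set \<Rightarrow> ('a set \<Rightarrow> bool) \<Rightarrow> 'a set \<Rightarrow> 'a set" where
  "mclosure E indep X = {a\<in>E. mrank indep (insert a X) = mrank indep X}"

definition is_matroid_closure :: "'a set \<Rightarrow> ('a set \<Rightarrow> 'a set) \<Rightarrow> bool" where
  "is_matroid_closure E H \<longleftrightarrow>
     (\<exists>indep. matroid E indep \<and> (\<forall>X. X \<subseteq> E \<longrightarrow> mclosure E indep X = H X))"

definition indep_sets :: "'a set \<Rightarrow> ('a set \<Rightarrow> 'a set) \<Rightarrow> 'a set set" where
  "indep_sets E H = {I. I \<subseteq> E \<and> (\<forall>x\<in>I. x \<notin> H (I - {x}))}"

definition closed_sets :: "'a set \<Rightarrow> ('a set \<Rightarrow> 'a set) \<Rightarrow> 'a set set" where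
  "closed_sets E H = {X. X \<subseteq> E \<and> H X = X}"

end

theory Submission
  imports Defs
begin

text \<open>
  A matroid closure has no loops as soon as it maps the empty set to itself, so every singleton
  has rank one and membership in the closure of a singleton is symmetric. For \<open>XH\<close>, where
  \<open>x \<in> XH {y}\<close> means \<open>y \<in> N(x)\<close>, this says that \<open>y \<in> N(x)\<close> iff \<open>x \<in> N(y)\<close>; then \<open>y \<in> N(x)\<close>
  forces \<open>N(y) = N(x)\<close>, and the union \<open>VH(X)\<close> of the neighbourhoods meeting \<open>X\<close> is exactly
  \<open>XH(X)\<close>. Independently, \<open>N(x) \<subseteq> K\<close> for every block \<open>K \<ni> x\<close> gives \<open>XH(X) \<subseteq> SH(X)\<close>, and
  \<open>XH\<close> is extensive; these yield both inclusions.
\<close>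

lemma cov_N_subset_block: "K \<in> C \<Longrightarrow> x \<in> K \<Longrightarrow> cov_N C x \<subseteq> K"
  unfolding cov_N_def by blast

lemma cov_N_mono: "x \<in> cov_N C y \<Longrightarrow> cov_N C x \<subseteq> cov_N C y"
  unfolding cov_N_def by blast

lemma mem_cov_N_self: "x \<in> cov_N C x"
  unfolding cov_N_def by blast

lemma covering_obtain_block:
  assumes "covering C E" "x \<in> E"
  obtains K where "K \<in> C" "x \<in> K"
proof -
  have "x \<in> \<Union>C" using assms unfolding covering_def by simp
  then show thesis using that by blast
qed

lemma covering_block_subset: "covering C E \<Longrightarrow> K \<in> C \<Longrightarrow> K \<subseteq> E"
  unfolding covering_def by simp

lemma cov_N_subset_ground:
  assumes "covering C E" "x \<in> E"
  shows "cov_N C x \<subseteq> E"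
proof -
  obtain K where K: "K \<in> C" "x \<in> K" using covering_obtain_block assms .
  show ?thesis
    using cov_N_subset_block[OF K] covering_block_subset[OF assms(1) K(1)] by (rule subset_trans)
qed

lemma XH_subset_SH:
  assumes "covering C E"
  shows "XH C E X \<subseteq> SH C X"
proof
  fix x assume "x \<in> XH C E X"
  then obtain z where x: "x \<in> E" and z: "z \<in> cov_N C x" "z \<in> X" unfolding XH_def by blast
  obtain K where K: "K \<in> C" "x \<in> K" using covering_obtain_block assms x .
  with z have "z \<in> K \<inter> X" using cov_N_subset_block[OF K] by blast
  with K show "x \<in> SH C X" unfolding SH_def by blast
qed

lemma subset_XH:
  assumes "X \<subseteq> E"
  shows "X \<subseteq> XH C E X"
proof
  fix x assume "x \<in> X"
  then have "x \<in> cov_N C x \<inter> X" using mem_cov_N_self by simp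
  with assms \<open>x \<in> X\<close> show "x \<in> XH C E X" unfolding XH_def by blast
qed

lemma mrank_empty:
  assumes "indep {}"
  shows "mrank indep {} = 0"
proof -
  have "{card I |I. I \<subseteq> {} \<and> indep I} = {0}" using assms by auto
  then show ?thesis unfolding mrank_def by simp
qed

lemma mrank_singleton_le_1:
  assumes "indep {}"
  shows "mrank indep {a} \<le> 1"
proof -
  let ?S = "{card I |I. I \<subseteq> {a} \<and> indep I}"
  have S: "?S \<subseteq> {0, 1}" by (auto simp: subset_singleton_iff)
  moreover have "?S \<noteq> {}" using assms by blast
  ultimately have "Max ?S \<in> {0, 1}" using Max_in[OF finite_subset[OF S]] S by blast
  then show ?thesis unfolding mrank_def by auto
qed

lemma mrank_singleton_loopless:
  assumes "matroid E indep" "mclosure E indep {} = {}" "a \<in> E"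
  shows "mrank indep {a} = 1"
proof -
  have empty: "indep {}" using assms(1) unfolding matroid_def by blast
  have "a \<notin> mclosure E indep {}" using assms(2) by simp
  then have "mrank indep {a} \<noteq> 0"
    using assms(3) mrank_empty[of indep, OF empty] unfolding mclosure_def by simp
  with mrank_singleton_le_1[of indep a, OF empty] show ?thesis by linarith
qed

lemma mclosure_singleton_sym:
  assumes "matroid E indep" "mclosure E indep {} = {}" "a \<in> E" "b \<in> E"
    and "a \<in> mclosure E indep {b}"
  shows "b \<in> mclosure E indep {a}"
proof -
  have "mrank indep {a, b} = mrank indep {b}" using assms(5) unfolding mclosure_def by simp
  also have "\<dots> = mrank indep {a}" using mrank_singleton_loopless[OF assms(1,2)] assms(3,4) by simp
  finally show ?thesis using assms(4) unfolding mclosure_def by (simp add: insert_commute)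
qed

lemma cov_N_sym:
  assumes XH: "is_matroid_closure E (XH C E)"
    and "x \<in> E" "y \<in> E" "y \<in> cov_N C x"
  shows "x \<in> cov_N C y"
proof -
  obtain indep where M: "matroid E indep"
    and cl: "\<And>X. X \<subseteq> E \<Longrightarrow> mclosure E indep X = XH C E X"
    using XH unfolding is_matroid_closure_def by blast
  have "mclosure E indep {} = {}" using cl[of "{}"] unfolding XH_def by simp
  moreover have "x \<in> mclosure E indep {y}" using cl[of "{y}"] assms(2-4) unfolding XH_def by auto
  ultimately have "y \<in> mclosure E indep {x}" using mclosure_singleton_sym[OF M] assms(2,3) by blast
  then show ?thesis using cl[of "{x}"] assms(2) unfolding XH_def by auto
qed

lemma VH_eq_XH:
  assumes cov: "covering C E" and XH: "is_matroid_closure E (XH C E)"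
  shows "VH C E X = XH C E X"
proof
  show "VH C E X \<subseteq> XH C E X"
  proof
    fix y assume "y \<in> VH C E X"
    then obtain x where x: "x \<in> E" "cov_N C x \<inter> X \<noteq> {}" "y \<in> cov_N C x"
      unfolding VH_def by blast
    have y: "y \<in> E" using cov_N_subset_ground[OF cov x(1)] x(3) by blast
    have "cov_N C x \<subseteq> cov_N C y" using cov_N_mono[OF cov_N_sym[OF XH x(1) y x(3)]] .
    with x(2) y show "y \<in> XH C E X" unfolding XH_def by blast
  qed
  show "XH C E X \<subseteq> VH C E X"
  proof
    fix x assume "x \<in> XH C E X"
    moreover have "x \<in> cov_N C x" by (rule mem_cov_N_self)
    ultimately show "x \<in> VH C E X" unfolding XH_def VH_def by blast
  qed
qed

lemma indep_sets_antimono: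
  assumes "\<And>X. X \<subseteq> E \<Longrightarrow> H X \<subseteq> G X"
  shows "indep_sets E G \<subseteq> indep_sets E H"
  unfolding indep_sets_def using assms by blast

lemma closed_sets_mono:
  assumes "\<And>X. X \<subseteq> E \<Longrightarrow> H X \<subseteq> G X" and "\<And>X. X \<subseteq> E \<Longrightarrow> X \<subseteq> H X"
  shows "closed_sets E G \<subseteq> closed_sets E H"
proof
  fix X assume "X \<in> closed_sets E G"
  then have X: "X \<subseteq> E" "G X = X" unfolding closed_sets_def by auto
  then have "H X = X" using assms[of X] by blast
  with X show "X \<in> closed_sets E H" unfolding closed_sets_def by blast
qed

theorem theorem12:
  fixes C :: "'a set set" and E :: "'a set"
  assumes "finite E" and "covering C E"
    and "is_matroid_closure E (SH C)" and "is_matroid_closure E (XH C E)"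
  shows "is_matroid_closure E (VH C E)
    \<and> indep_sets E (SH C) \<subseteq> indep_sets E (XH C E)
    \<and> indep_sets E (XH C E) = indep_sets E (VH C E)
    \<and> closed_sets E (SH C) \<subseteq> closed_sets E (XH C E)
    \<and> closed_sets E (XH C E) = closed_sets E (VH C E)"
proof -
  have VH: "VH C E = XH C E" using VH_eq_XH[OF assms(2,4)] by blast
  have "indep_sets E (SH C) \<subseteq> indep_sets E (XH C E)"
    using indep_sets_antimono XH_subset_SH[OF assms(2)] by metis
  moreover have "closed_sets E (SH C) \<subseteq> closed_sets E (XH C E)"
    using closed_sets_mono XH_subset_SH[OF assms(2)] subset_XH by metis
  ultimately show ?thesis using VH assms(4) by simp
qed

end
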